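(* Let $\xi,\zeta$ be admissible families with $E[\operatorname{ess\,sup}_{\theta\in\mathcal T}(\xi(\theta))^-]<+\infty$, $E[\operatorname{ess\,sup}_{\theta\in\mathcal T}(\zeta(\theta))^+]<+\infty$ and $\xi(T)=\zeta(T)=0$ a.s., and let $J_n,J'_n$ ($n\in\mathbb N$) be defined by $J_0=J'_0=0$, $J_{n+1}(\theta)=\operatorname{ess\,sup}_{\tau\in\mathcal T_\theta}E[J'_n(\tau)+\xi(\tau)\mid\mathcal F_\theta]$, $J'_{n+1}(\theta)=\operatorname{ess\,sup}_{\sigma\in\mathcal T_\theta}E[J_n(\sigma)-\zeta(\sigma)\mid\mathcal F_\theta]$. Then the sequences $(J_n)_{n\in\mathbb N}$ and $(J'_n)_{n\in\mathbb N}$ are almost surely non-decreasing: for each $n$ and each $\theta\in\mathcal T$, $J_n(\theta)\le J_{n+1}(\theta)$ and $J'_n(\theta)\le J'_{n+1}(\theta)$ a.s.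
   Context: Filtered probability space $(\Omega,\mathcal F,(\mathcal F_t)_{0\le t\le T},P)$ satisfying the usual conditions, $\mathcal F=\mathcal F_T$, $\mathcal F_0$ trivial, $T\in(0,\infty)$. $\mathcal T$: stopping times valued in $[0,T]$; $\mathcal T_S=\{\theta\in\mathcal T:\theta\ge S\text{ a.s.}\}$. A family $\phi=(\phi(\theta),\theta\in\mathcal T)$ of $\overline{\mathbb R}$-valued random variables is admissible if each $\phi(\theta)$ is $\mathcal F_\theta$-measurable and $\phi(\theta)=\phi(\theta')$ a.s. on $\{\theta=\theta'\}$. *)

theory Defs
  imports "HOL-Probability.Probability"
begin

definition usual_filtered_space :: "'a measure \<Rightarrow> (real \<Rightarrow> 'a measure) \<Rightarrow> real \<Rightarrow> bool" where
  "usual_filtered_space M F T \<longleftrightarrow>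
     prob_space M \<and> 0 < T \<and>
     (\<forall>t\<in>{0..T}. subalgebra M (F t)) \<and>
     (\<forall>s t. 0 \<le> s \<and> s \<le> t \<and> t \<le> T \<longrightarrow> sets (F s) \<subseteq> sets (F t)) \<and>
     (\<forall>t\<in>{0..<T}. sets (F t) = (\<Inter>s\<in>{t<..T}. sets (F s))) \<and>
     (\<forall>N A. N \<in> null_sets M \<and> A \<subseteq> N \<longrightarrow> A \<in> sets (F 0)) \<and>
     sets (F T) = sets M \<and>
     (\<forall>A\<in>sets (F 0). measure M A = 0 \<or> measure M A = 1)"

definition stop_times :: "'a measure \<Rightarrow> (real \<Rightarrow> 'a measure) \<Rightarrow> real \<Rightarrow> ('a \<Rightarrow> real) set" where
  "stop_times M F T = {\<theta>. (\<forall>\<omega>\<in>space M. 0 \<le> \<theta> \<omega> \<and> \<theta> \<omega> \<le> T) \<and>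
      (\<forall>t\<in>{0..T}. {\<omega>\<in>space M. \<theta> \<omega> \<le> t} \<in> sets (F t))}"

definition stop_times_from :: "'a measure \<Rightarrow> (real \<Rightarrow> 'a measure) \<Rightarrow> real \<Rightarrow> ('a \<Rightarrow> real) \<Rightarrow> ('a \<Rightarrow> real) set" where
  "stop_times_from M F T S = {\<theta> \<in> stop_times M F T. AE \<omega> in M. S \<omega> \<le> \<theta> \<omega>}"

definition stop_sigma :: "'a measure \<Rightarrow> (real \<Rightarrow> 'a measure) \<Rightarrow> real \<Rightarrow> ('a \<Rightarrow> real) \<Rightarrow> 'a measure" where
  "stop_sigma M F T \<theta> = sigma (space M)
     {A \<in> sets M. \<forall>t\<in>{0..T}. {\<omega>\<in>A. \<theta> \<omega> \<le> t} \<in> sets (F t)}"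

definition admissible :: "'a measure \<Rightarrow> (real \<Rightarrow> 'a measure) \<Rightarrow> real \<Rightarrow> (('a \<Rightarrow> real) \<Rightarrow> 'a \<Rightarrow> ereal) \<Rightarrow> bool" where
  "admissible M F T \<phi> \<longleftrightarrow>
     (\<forall>\<theta>\<in>stop_times M F T. \<phi> \<theta> \<in> borel_measurable (stop_sigma M F T \<theta>)) \<and>
     (\<forall>\<theta>\<in>stop_times M F T. \<forall>\<theta>'\<in>stop_times M F T.
        AE \<omega> in M. \<theta> \<omega> = \<theta>' \<omega> \<longrightarrow> \<phi> \<theta> \<omega> = \<phi> \<theta>' \<omega>)"

definition is_esssup :: "'a measure \<Rightarrow> ('a \<Rightarrow> ereal) set \<Rightarrow> ('a \<Rightarrow> ereal) \<Rightarrow> bool" where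
  "is_esssup M Xs Z \<longleftrightarrow>
     Z \<in> borel_measurable M \<and>
     (\<forall>X\<in>Xs. AE \<omega> in M. X \<omega> \<le> Z \<omega>) \<and>
     (\<forall>W\<in>borel_measurable M. (\<forall>X\<in>Xs. AE \<omega> in M. X \<omega> \<le> W \<omega>) \<longrightarrow> (AE \<omega> in M. Z \<omega> \<le> W \<omega>))"

text \<open>Generalised conditional expectation of an extended-real random variable:
E[X^+ | G] - E[X^- | G] (well defined whenever one of the two parts is finite).\<close>
definition cond_exp_ereal :: "'a measure \<Rightarrow> 'a measure \<Rightarrow> ('a \<Rightarrow> ereal) \<Rightarrow> 'a \<Rightarrow> ereal" where
  "cond_exp_ereal M G X = (\<lambda>\<omega>.
     enn2ereal (nn_cond_exp M G (\<lambda>x. e2ennreal (X x)) \<omega>)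
     - enn2ereal (nn_cond_exp M G (\<lambda>x. e2ennreal (- X x)) \<omega>))"

end

theory Submission
  imports Defs
begin

text \<open>Both recursions are monotone: if \<open>J n \<le> J (n+1)\<close> and \<open>J' n \<le> J' (n+1)\<close> a.s. at every
stopping time, then the conditional expectations entering the next step are ordered, hence so are
their essential suprema. For the base case \<open>0 \<le> J 1, J' 1\<close> it suffices to look at the single
member of each supremum given by the terminal time \<open>\<tau> = T\<close>, where \<open>\<xi>(T) = \<zeta>(T) = 0\<close>.\<close>

lemma is_esssup_measurable: "is_esssup M Xs Z \<Longrightarrow> Z \<in> borel_measurable M"
  unfolding is_esssup_def by blast

lemma is_esssup_upper: "is_esssup M Xs Z \<Longrightarrow> X \<in> Xs \<Longrightarrow> AE \<omega> in M. X \<omega> \<le> Z \<omega>"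
  unfolding is_esssup_def by blast

lemma is_esssup_least:
  assumes "is_esssup M Xs Z" "W \<in> borel_measurable M"
    and "\<And>X. X \<in> Xs \<Longrightarrow> AE \<omega> in M. X \<omega> \<le> W \<omega>"
  shows "AE \<omega> in M. Z \<omega> \<le> W \<omega>"
  using assms unfolding is_esssup_def by blast

lemma is_esssup_mono:
  assumes Z: "is_esssup M Xs Z" and W: "is_esssup M Ys W"
    and dominated: "\<And>X. X \<in> Xs \<Longrightarrow> \<exists>Y\<in>Ys. AE \<omega> in M. X \<omega> \<le> Y \<omega>"
  shows "AE \<omega> in M. Z \<omega> \<le> W \<omega>"
proof (rule is_esssup_least[OF Z is_esssup_measurable[OF W]])
  fix X assume "X \<in> Xs"
  then obtain Y where "Y \<in> Ys" and XY: "AE \<omega> in M. X \<omega> \<le> Y \<omega>"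
    using dominated by blast
  show "AE \<omega> in M. X \<omega> \<le> W \<omega>"
    using XY is_esssup_upper[OF W \<open>Y \<in> Ys\<close>] by eventually_elim (rule order_trans)
qed

lemma cond_exp_ereal_mono:
  assumes "prob_space M" "subalgebra M G"
    and X: "X \<in> borel_measurable M" and Y: "Y \<in> borel_measurable M"
    and le: "AE x in M. X x \<le> Y x"
  shows "AE x in M. cond_exp_ereal M G X x \<le> cond_exp_ereal M G Y x"
proof -
  interpret finite_measure_subalgebra M G
    using assms unfolding finite_measure_subalgebra_def finite_measure_subalgebra_axioms_def
    by (simp add: prob_space_def)
  have "AE x in M. nn_cond_exp M G (\<lambda>x. e2ennreal (X x)) x
                   \<le> nn_cond_exp M G (\<lambda>x. e2ennreal (Y x)) x"
    by (rule nn_cond_exp_mono) (use le X Y in \<open>auto intro: e2ennreal_mono\<close>)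
  moreover have "AE x in M. nn_cond_exp M G (\<lambda>x. e2ennreal (- Y x)) x
                            \<le> nn_cond_exp M G (\<lambda>x. e2ennreal (- X x)) x"
    by (rule nn_cond_exp_mono) (use le X Y in \<open>auto intro!: e2ennreal_mono elim!: AE_mp\<close>)
  ultimately show ?thesis
    unfolding cond_exp_ereal_def
    by eventually_elim (auto intro!: ereal_minus_mono simp: less_eq_ennreal.rep_eq)
qed

lemma cond_exp_ereal_zero:
  assumes "prob_space M" "subalgebra M G"
  shows "AE x in M. cond_exp_ereal M G (\<lambda>_. 0) x = 0"
proof -
  interpret finite_measure_subalgebra M G
    using assms unfolding finite_measure_subalgebra_def finite_measure_subalgebra_axioms_def
    by (simp add: prob_space_def)
  have "AE x in M. (\<lambda>_. 0) x = nn_cond_exp M G (\<lambda>_. 0) x"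
    by (rule nn_cond_exp_F_meas) simp
  then show ?thesis
    unfolding cond_exp_ereal_def by eventually_elim (auto simp: zero_ennreal.rep_eq)
qed

lemma esssup_cond_exp_mono:
  assumes "prob_space M" "subalgebra M G"
    and Z: "is_esssup M {cond_exp_ereal M G (f \<tau>) | \<tau>. \<tau> \<in> S} Z"
    and W: "is_esssup M {cond_exp_ereal M G (g \<tau>) | \<tau>. \<tau> \<in> S} W"
    and measurable: "\<And>\<tau>. \<tau> \<in> S \<Longrightarrow> f \<tau> \<in> borel_measurable M \<and> g \<tau> \<in> borel_measurable M"
    and le: "\<And>\<tau>. \<tau> \<in> S \<Longrightarrow> AE \<omega> in M. f \<tau> \<omega> \<le> g \<tau> \<omega>"
  shows "AE \<omega> in M. Z \<omega> \<le> W \<omega>"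
proof (rule is_esssup_mono[OF Z W])
  fix X assume "X \<in> {cond_exp_ereal M G (f \<tau>) | \<tau>. \<tau> \<in> S}"
  then obtain \<tau> where \<tau>: "\<tau> \<in> S" and X: "X = cond_exp_ereal M G (f \<tau>)"
    by blast
  have "AE \<omega> in M. X \<omega> \<le> cond_exp_ereal M G (g \<tau>) \<omega>"
    unfolding X using measurable[OF \<tau>] le[OF \<tau>] by (intro cond_exp_ereal_mono[OF assms(1,2)]) auto
  with \<tau> show "\<exists>Y\<in>{cond_exp_ereal M G (g \<tau>) | \<tau>. \<tau> \<in> S}. AE \<omega> in M. X \<omega> \<le> Y \<omega>"
    by blast
qed

lemma esssup_cond_exp_nonneg:
  assumes "prob_space M" "subalgebra M G"
    and Z: "is_esssup M {cond_exp_ereal M G (f \<tau>) | \<tau>. \<tau> \<in> S} Z"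
    and "\<tau> \<in> S" "f \<tau> \<in> borel_measurable M" "AE \<omega> in M. 0 \<le> f \<tau> \<omega>"
  shows "AE \<omega> in M. 0 \<le> Z \<omega>"
proof -
  have "AE \<omega> in M. cond_exp_ereal M G (\<lambda>_. 0) \<omega> \<le> cond_exp_ereal M G (f \<tau>) \<omega>"
    by (rule cond_exp_ereal_mono[OF assms(1,2) borel_measurable_const assms(5,6)])
  moreover have "AE \<omega> in M. cond_exp_ereal M G (f \<tau>) \<omega> \<le> Z \<omega>"
    using is_esssup_upper[OF Z] \<open>\<tau> \<in> S\<close> by blast
  ultimately show ?thesis
    using cond_exp_ereal_zero[OF assms(1,2)] by eventually_elim simp
qed

lemma subalgebra_stop_sigma: "subalgebra M (stop_sigma M F T \<theta>)"
proof -
  let ?A = "{A \<in> sets M. \<forall>t\<in>{0..T}. {\<omega>\<in>A. \<theta> \<omega> \<le> t} \<in> sets (F t)}"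
  have "?A \<subseteq> Pow (space M)"
    using sets.sets_into_space by blast
  moreover have "sigma_sets (space M) ?A \<subseteq> sets M"
    by (rule sets.sigma_sets_subset) auto
  ultimately show ?thesis
    unfolding subalgebra_def stop_sigma_def by (simp add: space_measure_of_conv sets_measure_of)
qed

lemma admissible_measurable:
  "admissible M F T \<phi> \<Longrightarrow> \<theta> \<in> stop_times M F T \<Longrightarrow> \<phi> \<theta> \<in> borel_measurable M"
  unfolding admissible_def by (blast intro: measurable_from_subalg[OF subalgebra_stop_sigma])

lemma stop_times_fromD: "\<tau> \<in> stop_times_from M F T \<theta> \<Longrightarrow> \<tau> \<in> stop_times M F T"
  unfolding stop_times_from_def by blast

lemma usual_filtered_spaceD:
  assumes "usual_filtered_space M F T"
  shows "prob_space M" "0 < T" "t \<in> {0..T} \<Longrightarrow> subalgebra M (F t)"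
proof -
  have "prob_space M \<and> 0 < T \<and> (\<forall>t\<in>{0..T}. subalgebra M (F t))"
    using assms unfolding usual_filtered_space_def by (elim conjE) (intro conjI)
  then show "prob_space M" "0 < T" "t \<in> {0..T} \<Longrightarrow> subalgebra M (F t)"
    by blast+
qed

lemma terminal_time_in_stop_times_from:
  assumes "usual_filtered_space M F T" "\<theta> \<in> stop_times M F T"
  shows "(\<lambda>_. T) \<in> stop_times_from M F T \<theta>"
proof -
  have "{\<omega>\<in>space M. T \<le> t} \<in> sets (F t)" if "t \<in> {0..T}" for t
  proof (cases "T \<le> t")
    case True
    with usual_filtered_spaceD(3)[OF assms(1) that] show ?thesis
      using sets.top[of "F t"] by (simp add: subalgebra_def)
  qed simp
  moreover have "AE \<omega> in M. \<theta> \<omega> \<le> T"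
    using assms(2) by (intro AE_I2) (simp add: stop_times_def)
  moreover have "0 \<le> T"
    using usual_filtered_spaceD(2)[OF assms(1)] by simp
  ultimately show ?thesis
    unfolding stop_times_from_def stop_times_def by blast
qed

theorem lemma2p2:
  fixes M :: "'a measure" and F :: "real \<Rightarrow> 'a measure" and T :: real
    and \<xi> \<zeta> :: "('a \<Rightarrow> real) \<Rightarrow> 'a \<Rightarrow> ereal"
    and J J' :: "nat \<Rightarrow> ('a \<Rightarrow> real) \<Rightarrow> 'a \<Rightarrow> ereal"
  assumes space: "usual_filtered_space M F T"
    and adm_xi: "admissible M F T \<xi>"
    and adm_zeta: "admissible M F T \<zeta>"
    and int_xi: "\<exists>Z. is_esssup M {(\<lambda>\<omega>. max 0 (- \<xi> \<theta> \<omega>)) | \<theta>. \<theta> \<in> stop_times M F T} Z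
                     \<and> (\<integral>\<^sup>+ \<omega>. e2ennreal (Z \<omega>) \<partial>M) < \<infinity>"
    and int_zeta: "\<exists>Z. is_esssup M {(\<lambda>\<omega>. max 0 (\<zeta> \<theta> \<omega>)) | \<theta>. \<theta> \<in> stop_times M F T} Z
                     \<and> (\<integral>\<^sup>+ \<omega>. e2ennreal (Z \<omega>) \<partial>M) < \<infinity>"
    and xi_T: "AE \<omega> in M. \<xi> (\<lambda>_. T) \<omega> = 0"
    and zeta_T: "AE \<omega> in M. \<zeta> (\<lambda>_. T) \<omega> = 0"
    and J0: "\<And>\<theta>. J 0 \<theta> = (\<lambda>_. 0)"
    and J'0: "\<And>\<theta>. J' 0 \<theta> = (\<lambda>_. 0)"
    and J_Suc: "\<And>n \<theta>. \<theta> \<in> stop_times M F T \<Longrightarrow>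
       is_esssup M {cond_exp_ereal M (stop_sigma M F T \<theta>) (\<lambda>\<omega>. J' n \<tau> \<omega> + \<xi> \<tau> \<omega>)
                    | \<tau>. \<tau> \<in> stop_times_from M F T \<theta>} (J (Suc n) \<theta>)"
    and J'_Suc: "\<And>n \<theta>. \<theta> \<in> stop_times M F T \<Longrightarrow>
       is_esssup M {cond_exp_ereal M (stop_sigma M F T \<theta>) (\<lambda>\<omega>. J n \<sigma> \<omega> - \<zeta> \<sigma> \<omega>)
                    | \<sigma>. \<sigma> \<in> stop_times_from M F T \<theta>} (J' (Suc n) \<theta>)"
  shows "\<forall>n. \<forall>\<theta>\<in>stop_times M F T.
           (AE \<omega> in M. J n \<theta> \<omega> \<le> J (Suc n) \<theta> \<omega>) \<and>
           (AE \<omega> in M. J' n \<theta> \<omega> \<le> J' (Suc n) \<theta> \<omega>)"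
proof
  note P = usual_filtered_spaceD(1)[OF space]
  note sub = subalgebra_stop_sigma[of M F T]
  have measurable: "J n \<tau> \<in> borel_measurable M" "J' n \<tau> \<in> borel_measurable M"
    "\<xi> \<tau> \<in> borel_measurable M" "\<zeta> \<tau> \<in> borel_measurable M"
    if "\<tau> \<in> stop_times M F T" for n \<tau>
    using that is_esssup_measurable[OF J_Suc] is_esssup_measurable[OF J'_Suc]
      admissible_measurable[OF adm_xi] admissible_measurable[OF adm_zeta]
    by (cases n; simp add: J0 J'0)+
  have summands_measurable:
    "(\<lambda>\<omega>. J' n \<tau> \<omega> + \<xi> \<tau> \<omega>) \<in> borel_measurable M" "(\<lambda>\<omega>. J n \<tau> \<omega> - \<zeta> \<tau> \<omega>) \<in> borel_measurable M"
    if "\<tau> \<in> stop_times_from M F T \<theta>" for n \<tau> \<theta>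
    using measurable[OF stop_times_fromD[OF that]] by measurable
  fix n show "\<forall>\<theta>\<in>stop_times M F T. (AE \<omega> in M. J n \<theta> \<omega> \<le> J (Suc n) \<theta> \<omega>) \<and>
                                     (AE \<omega> in M. J' n \<theta> \<omega> \<le> J' (Suc n) \<theta> \<omega>)"
  proof (induction n)
    case 0
    show ?case
    proof (intro ballI conjI)
      fix \<theta> assume \<theta>: "\<theta> \<in> stop_times M F T"
      have T_from: "(\<lambda>_. T) \<in> stop_times_from M F T \<theta>"
        by (rule terminal_time_in_stop_times_from[OF space \<theta>])
      note T = stop_times_fromD[OF T_from]
      show "AE \<omega> in M. J 0 \<theta> \<omega> \<le> J (Suc 0) \<theta> \<omega>"
        unfolding J0
        by (rule esssup_cond_exp_nonneg[OF P sub J_Suc[OF \<theta>] T_from])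
           (use xi_T measurable[OF T] in \<open>auto simp: J'0\<close>)
      show "AE \<omega> in M. J' 0 \<theta> \<omega> \<le> J' (Suc 0) \<theta> \<omega>"
        unfolding J'0
        by (rule esssup_cond_exp_nonneg[OF P sub J'_Suc[OF \<theta>] T_from])
           (use zeta_T measurable[OF T] in \<open>auto simp: J0\<close>)
    qed
  next
    case (Suc n)
    have IH: "AE \<omega> in M. J n \<tau> \<omega> \<le> J (Suc n) \<tau> \<omega>" "AE \<omega> in M. J' n \<tau> \<omega> \<le> J' (Suc n) \<tau> \<omega>"
      if "\<tau> \<in> stop_times_from M F T \<theta>" for \<tau> \<theta>
      using Suc.IH stop_times_fromD[OF that] by blast+
    show ?case
    proof (intro ballI conjI)
      fix \<theta> assume \<theta>: "\<theta> \<in> stop_times M F T"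
      show "AE \<omega> in M. J (Suc n) \<theta> \<omega> \<le> J (Suc (Suc n)) \<theta> \<omega>"
      proof (rule esssup_cond_exp_mono[OF P sub J_Suc[OF \<theta>] J_Suc[OF \<theta>]])
        fix \<tau> assume \<tau>: "\<tau> \<in> stop_times_from M F T \<theta>"
        show "AE \<omega> in M. J' n \<tau> \<omega> + \<xi> \<tau> \<omega> \<le> J' (Suc n) \<tau> \<omega> + \<xi> \<tau> \<omega>"
          using IH(2)[OF \<tau>] by eventually_elim (rule add_right_mono)
      qed (simp add: summands_measurable)
      show "AE \<omega> in M. J' (Suc n) \<theta> \<omega> \<le> J' (Suc (Suc n)) \<theta> \<omega>"
      proof (rule esssup_cond_exp_mono[OF P sub J'_Suc[OF \<theta>] J'_Suc[OF \<theta>]])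
        fix \<tau> assume \<tau>: "\<tau> \<in> stop_times_from M F T \<theta>"
        show "AE \<omega> in M. J n \<tau> \<omega> - \<zeta> \<tau> \<omega> \<le> J (Suc n) \<tau> \<omega> - \<zeta> \<tau> \<omega>"
          using IH(1)[OF \<tau>] by eventually_elim (rule ereal_minus_mono, simp_all)
      qed (simp add: summands_measurable)
    qed
  qed
qed

end
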